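(* Let $\phi$ be a uniformly convex N-function. For every interior face $\gamma\in\mathcal F(\Omega)$ and every $v_h\in V_h$ at least one of the following two equivalences holds: \[ |[\![\nabla_h v_h]\!]_\gamma|\eqsim|[\![\gamma_\tau\nabla_h v_h]\!]_\gamma|\qquad\text{or}\qquad |[\![A(\nabla_h v_h)]\!]_\gamma|\eqsim|[\![A(\nabla_h v_h)\cdot\nu]\!]_\gamma|. \]
   Context: Let $d\in\{2,3\}$, let $\Omega\subset\mathbb R^d$ be a bounded polyhedral Lipschitz domain, and let $\mathcal T$ be a regular (conforming) triangulation of $\Omega$ into $d$-simplices with faces $\mathcal F$, interior faces $\mathcal F(\Omega)=\{\gamma\in\mathcal F:\gamma\not\subset\partial\Omega\}$ and boundary faces $\mathcal F(\partial\Omega)=\mathcal F\setminus\mathcal F(\Omega)$. A function $\varphi:[0,\infty)\to[0,\infty)$ is an N-function if it is continuous and convex and $\varphi(t)=\int_0^t\varphi'(s)\,ds$ for a right-continuous non-decreasing $\varphi'$ with $\varphi'(0)=0$, $\varphi'(t)>0$ for $t>0$, $\lim_{t\to\infty}\varphi'(t)=\infty$; it is uniformly convex if there are $0<c_{uc}\le C_{uc}<\infty$ with $c_{uc}\frac{\varphi'(s)-\varphi'(t)}{s-t}\le\frac{\varphi'(s)}{s}\le C_{uc}\frac{\varphi'(s)-\varphi'(t)}{s-t}$ for all $s>0$, $t\in[0,s)$. For $Q\in\mathbb R^d$, $A(Q)=\frac{\phi'(|Q|)}{|Q|}Q$ if $Q\ne0$ and $A(0)=0$. $V_h=\{v_h$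 piecewise affine on $\mathcal T$: $v_h$ is continuous at the barycenter of every $\gamma\in\mathcal F(\Omega)$ and vanishes at the barycenter of every $\gamma\in\mathcal F(\partial\Omega)\}$ is the Crouzeix--Raviart space and $\nabla_h$ the elementwise gradient. For $\gamma\in\mathcal F(\Omega)$ fix the two simplices $T_+,T_-\in\mathcal T$ with $\gamma=T_+\cap T_-$ and let $\nu$ be the unit normal of $\gamma$ pointing from $T_+$ to $T_-$; for a piecewise constant (scalar or vector-valued) $w$ the jump is $[\![w]\!]_\gamma=w|_{T_+}-w|_{T_-}$. The tangential trace is $\gamma_\tau Q=Q\cdot(-\nu_2,\nu_1)^\top$ for $d=2$ and $\gamma_\tau Q=Q\times\nu$ for $d=3$. $a\eqsim b$ means $c\,b\le a\le C\,b$ with $0<c\le C<\infty$ depending only on $c_{uc},C_{uc}$, $d$ and the shape regularity of $\mathcal T$. *)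

theory Defs
  imports "HOL-Analysis.Analysis" "HOL-Analysis.Cross3"
begin

definition N_function :: "(real \<Rightarrow> real) \<Rightarrow> (real \<Rightarrow> real) \<Rightarrow> bool" where
  "N_function phi phi' \<longleftrightarrow>
     (\<forall>t\<ge>0. phi t \<ge> 0) \<and> continuous_on {0..} phi \<and> convex_on {0..} phi \<and>
     (\<forall>t\<ge>0. (phi' has_integral phi t) {0..t}) \<and>
     (\<forall>t\<ge>0. continuous (at_right t) phi') \<and> mono_on {0..} phi' \<and>
     phi' 0 = 0 \<and> (\<forall>t>0. phi' t > 0) \<and> filterlim phi' at_top at_top"

definition uniformly_convex_N :: "real \<Rightarrow> real \<Rightarrow> (real \<Rightarrow> real) \<Rightarrow> (real \<Rightarrow> real) \<Rightarrow> bool" where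
  "uniformly_convex_N cuc Cuc phi phi' \<longleftrightarrow>
     N_function phi phi' \<and> 0 < cuc \<and> cuc \<le> Cuc \<and>
     (\<forall>s>0. \<forall>t. 0 \<le> t \<and> t < s \<longrightarrow>
        cuc * ((phi' s - phi' t) / (s - t)) \<le> phi' s / s \<and>
        phi' s / s \<le> Cuc * ((phi' s - phi' t) / (s - t)))"

definition A_flux :: "(real \<Rightarrow> real) \<Rightarrow> 'a::real_normed_vector \<Rightarrow> 'a" where
  "A_flux phi' Q = (if Q = 0 then 0 else (phi' (norm Q) / norm Q) *\<^sub>R Q)"

definition lipschitz_domain :: "'a::euclidean_space set \<Rightarrow> bool" where
  "lipschitz_domain \<Omega> \<longleftrightarrow> open \<Omega> \<and> connected \<Omega> \<and> bounded \<Omega> \<and> \<Omega> \<noteq> {} \<and>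
     (\<forall>x\<in>frontier \<Omega>. \<exists>e r L f. norm e = 1 \<and> r > 0 \<and> L \<ge> 0 \<and>
        (\<forall>y z. \<bar>f y - f z\<bar> \<le> L * norm (y - z)) \<and>
        \<Omega> \<inter> ball x r = {y \<in> ball x r. y \<bullet> e < f (y - (y \<bullet> e) *\<^sub>R e)})"

text \<open>A simplex is represented by its set of d+1 affinely independent vertices.\<close>
definition is_simplex :: "'a::euclidean_space set \<Rightarrow> bool" where
  "is_simplex V \<longleftrightarrow> finite V \<and> card V = DIM('a) + 1 \<and> \<not> affine_dependent V"

definition triangulation :: "'a::euclidean_space set \<Rightarrow> 'a set set \<Rightarrow> bool" where
  "triangulation \<Omega> \<T> \<longleftrightarrow> finite \<T> \<and> (\<forall>V\<in>\<T>. is_simplex V) \<and>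
     (\<forall>V\<in>\<T>. \<forall>W\<in>\<T>. convex hull V \<inter> convex hull W = convex hull (V \<inter> W)) \<and>
     (\<Union>V\<in>\<T>. convex hull V) = closure \<Omega>"

definition inradius :: "'a::euclidean_space set \<Rightarrow> real" where
  "inradius S = Sup {r. \<exists>x. cball x r \<subseteq> S}"

definition shape_regular :: "real \<Rightarrow> 'a::euclidean_space set set \<Rightarrow> bool" where
  "shape_regular \<sigma> \<T> \<longleftrightarrow> (\<forall>V\<in>\<T>. diameter (convex hull V) \<le> \<sigma> * inradius (convex hull V))"

definition faces :: "'a::euclidean_space set set \<Rightarrow> 'a set set" where
  "faces \<T> = {F. card F = DIM('a) \<and> (\<exists>V\<in>\<T>. F \<subseteq> V)}"

definition interior_faces :: "'a::euclidean_space set \<Rightarrow> 'a set set \<Rightarrow> 'a set set" where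
  "interior_faces \<Omega> \<T> = {F \<in> faces \<T>. \<not> (convex hull F \<subseteq> frontier \<Omega>)}"

definition boundary_faces :: "'a::euclidean_space set \<Rightarrow> 'a set set \<Rightarrow> 'a set set" where
  "boundary_faces \<Omega> \<T> = faces \<T> - interior_faces \<Omega> \<T>"

definition barycenter :: "'a::euclidean_space set \<Rightarrow> 'a" where
  "barycenter F = (1 / real (card F)) *\<^sub>R (\<Sum>p\<in>F. p)"

definition unit_normal_from :: "'a::euclidean_space set \<Rightarrow> 'a set \<Rightarrow> 'a \<Rightarrow> bool" where
  "unit_normal_from F Tp \<nu> \<longleftrightarrow> norm \<nu> = 1 \<and> (\<forall>p\<in>F. \<forall>q\<in>F. \<nu> \<bullet> (p - q) = 0) \<and>
     (\<forall>z\<in>Tp - F. \<forall>p\<in>F. \<nu> \<bullet> (z - p) < 0)"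

text \<open>A piecewise affine function is given elementwise: on the simplex V it is
  x \<mapsto> fst (v V) \<bullet> x + snd (v V); so fst (v V) is the elementwise gradient.\<close>
definition pw_value :: "('a::euclidean_space set \<Rightarrow> 'a \<times> real) \<Rightarrow> 'a set \<Rightarrow> 'a \<Rightarrow> real" where
  "pw_value v V x = fst (v V) \<bullet> x + snd (v V)"

definition grad_h :: "('a::euclidean_space set \<Rightarrow> 'a \<times> real) \<Rightarrow> 'a set \<Rightarrow> 'a" where
  "grad_h v V = fst (v V)"

definition CR_space :: "'a::euclidean_space set \<Rightarrow> 'a set set \<Rightarrow> ('a set \<Rightarrow> 'a \<times> real) set" where
  "CR_space \<Omega> \<T> = {v.
     (\<forall>F\<in>interior_faces \<Omega> \<T>. \<forall>V\<in>\<T>. \<forall>W\<in>\<T>. F \<subseteq> V \<longrightarrow> F \<subseteq> W \<longrightarrow>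
        pw_value v V (barycenter F) = pw_value v W (barycenter F)) \<and>
     (\<forall>F\<in>boundary_faces \<Omega> \<T>. \<forall>V\<in>\<T>. F \<subseteq> V \<longrightarrow> pw_value v V (barycenter F) = 0)}"

definition tang2 :: "real^2 \<Rightarrow> real^2 \<Rightarrow> real" where
  "tang2 \<nu> Q = Q \<bullet> vector [- (\<nu>$2), \<nu>$1]"

definition tang3 :: "real^3 \<Rightarrow> real^3 \<Rightarrow> real^3" where
  "tang3 \<nu> Q = cross3 Q \<nu>"

end

theory Submission
  imports Defs
begin

text \<open>Uniform convexity makes the flux A monotone with a uniform angle bound:
  (A P - A R) \<bullet> (P - R) \<ge> \<gamma> |A P - A R| |P - R| with \<gamma> = sqrt (min cuc (1/Cuc)).
  Indeed, writing A Q = (phi' |Q| / |Q|) Q, the difference splits into a radial part, controlled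
  by the secant bounds on phi' that define uniform convexity, and an angular part weighted by
  |P| |R| - P \<bullet> R \<ge> 0.
  The lower bounds of both equivalences are trivial. If the jump q of the gradient is not
  dominated by its tangential part, then q is nearly normal, and the angle bound forces the jump of
  A to be nearly normal too, so that its normal component dominates it. Only the unit normal
  enters the argument.\<close>

lemma norm_scaleR_diff_power2:
  fixes P R :: "'a::real_inner"
  shows "(norm (a *\<^sub>R P - b *\<^sub>R R))\<^sup>2
           = (a * norm P - b * norm R)\<^sup>2 + 2 * a * b * (norm P * norm R - P \<bullet> R)"
proof -
  have "(norm (a *\<^sub>R P - b *\<^sub>R R))\<^sup>2 = a\<^sup>2 * (norm P)\<^sup>2 - 2 * a * b * (P \<bullet> R) + b\<^sup>2 * (norm R)\<^sup>2"
    by (simp add: power2_norm_eq_inner inner_diff_left inner_diff_right inner_commute)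
       (simp add: power2_eq_square algebra_simps)
  then show ?thesis
    by (simp add: power2_eq_square algebra_simps)
qed

lemma inner_scaleR_diff_diff:
  fixes P R :: "'a::real_inner"
  shows "(a *\<^sub>R P - b *\<^sub>R R) \<bullet> (P - R)
           = (a * norm P - b * norm R) * (norm P - norm R) + (a + b) * (norm P * norm R - P \<bullet> R)"
  by (simp add: inner_diff_left inner_diff_right inner_commute flip: power2_norm_eq_inner)
     (simp add: power2_eq_square algebra_simps)

lemma norm_tangential_power2:
  fixes q \<nu> :: "'a::real_inner"
  assumes "norm \<nu> = 1"
  shows "(norm (q - (q \<bullet> \<nu>) *\<^sub>R \<nu>))\<^sup>2 = (norm q)\<^sup>2 - (q \<bullet> \<nu>)\<^sup>2"
proof -
  have "\<nu> \<bullet> \<nu> = 1" using assms by (simp add: dot_square_norm)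
  then show ?thesis
    by (simp add: power2_norm_eq_inner inner_diff_left inner_diff_right inner_commute)
       (simp add: power2_eq_square)
qed

lemma norm_tangential_le:
  fixes q \<nu> :: "'a::real_inner"
  assumes "norm \<nu> = 1"
  shows "norm (q - (q \<bullet> \<nu>) *\<^sub>R \<nu>) \<le> norm q"
proof (rule power2_le_imp_le)
  show "(norm (q - (q \<bullet> \<nu>) *\<^sub>R \<nu>))\<^sup>2 \<le> (norm q)\<^sup>2"
    using norm_tangential_power2[OF assms, of q] by simp
qed simp

lemma abs_tang2_eq_norm_tangential:
  assumes "norm \<nu> = 1"
  shows "\<bar>tang2 \<nu> q\<bar> = norm (q - (q \<bullet> \<nu>) *\<^sub>R \<nu>)"
proof -
  have "(tang2 \<nu> q)\<^sup>2 + (q \<bullet> \<nu>)\<^sup>2 = (norm q)\<^sup>2 * (norm \<nu>)\<^sup>2"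
    unfolding tang2_def power2_norm_eq_inner
    by (simp add: inner_vec_def sum_2 power2_eq_square algebra_simps)
  then have "\<bar>tang2 \<nu> q\<bar>\<^sup>2 = (norm (q - (q \<bullet> \<nu>) *\<^sub>R \<nu>))\<^sup>2"
    using assms by (simp add: norm_tangential_power2)
  then show ?thesis by (metis power2_abs power2_eq_iff_nonneg abs_ge_zero norm_ge_zero)
qed

lemma norm_tang3_eq_norm_tangential:
  assumes "norm \<nu> = 1"
  shows "norm (tang3 \<nu> q) = norm (q - (q \<bullet> \<nu>) *\<^sub>R \<nu>)"
proof -
  have "(norm (tang3 \<nu> q))\<^sup>2 = (norm (q - (q \<bullet> \<nu>) *\<^sub>R \<nu>))\<^sup>2"
    using norm_cross_dot[of q \<nu>] assms by (simp add: tang3_def norm_tangential_power2)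
  then show ?thesis by simp
qed

lemma tang2_diff: "tang2 \<nu> P - tang2 \<nu> R = tang2 \<nu> (P - R)"
  by (simp add: tang2_def inner_diff_left)

lemma tang3_diff: "tang3 \<nu> P - tang3 \<nu> R = tang3 \<nu> (P - R)"
  by (simp add: tang3_def Cross3.left_diff_distrib)

lemma normal_or_tangential_dominates:
  fixes a q \<nu> :: "'a::real_inner"
  assumes \<nu>: "norm \<nu> = 1" and g: "0 < g" and angle: "g * norm a * norm q \<le> a \<bullet> q"
  shows "norm q \<le> 2/g * norm (q - (q \<bullet> \<nu>) *\<^sub>R \<nu>) \<or> norm a \<le> 2/g * \<bar>a \<bullet> \<nu>\<bar>"
proof (cases "norm q \<le> 2/g * norm (q - (q \<bullet> \<nu>) *\<^sub>R \<nu>)")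
  case False
  define t where "t = q - (q \<bullet> \<nu>) *\<^sub>R \<nu>"
  from False have t_q: "2/g * norm t < norm q" by (simp add: t_def)
  then have t_small: "norm t < g/2 * norm q"
    using g by (simp add: field_simps)
  have "0 \<le> 2/g * norm t" using g by simp
  with t_q have "0 < norm q" by linarith
  have "a \<bullet> q = (q \<bullet> \<nu>) * (a \<bullet> \<nu>) + a \<bullet> t"
    by (simp add: t_def inner_diff_right)
  also have "\<dots> \<le> norm q * \<bar>a \<bullet> \<nu>\<bar> + norm a * norm t"
  proof -
    have "(q \<bullet> \<nu>) * (a \<bullet> \<nu>) \<le> \<bar>q \<bullet> \<nu>\<bar> * \<bar>a \<bullet> \<nu>\<bar>"
      by (simp add: flip: abs_mult)
    also have "\<dots> \<le> norm q * \<bar>a \<bullet> \<nu>\<bar>"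
      using Cauchy_Schwarz_ineq2[of q \<nu>] \<nu> by (intro mult_right_mono) simp_all
    finally have "(q \<bullet> \<nu>) * (a \<bullet> \<nu>) \<le> norm q * \<bar>a \<bullet> \<nu>\<bar>" .
    moreover have "a \<bullet> t \<le> norm a * norm t" by (rule norm_cauchy_schwarz)
    ultimately show ?thesis by linarith
  qed
  also have "\<dots> \<le> norm q * \<bar>a \<bullet> \<nu>\<bar> + norm a * (g/2 * norm q)"
    using t_small by (intro add_left_mono mult_left_mono) auto
  finally have "g * norm a * norm q \<le> norm q * \<bar>a \<bullet> \<nu>\<bar> + norm a * (g/2 * norm q)"
    using angle by linarith
  then have "g/2 * norm a * norm q \<le> \<bar>a \<bullet> \<nu>\<bar> * norm q"
    by (simp add: algebra_simps)
  then have "norm a \<le> 2/g * \<bar>a \<bullet> \<nu>\<bar>"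
    using \<open>0 < norm q\<close> g by (simp add: field_simps)
  then show ?thesis ..
qed simp

lemma N_function_deriv_mono:
  assumes "N_function phi phi'" "0 \<le> t" "t \<le> s"
  shows "phi' t \<le> phi' s"
  using assms unfolding N_function_def by (auto intro: mono_onD)

lemma N_function_deriv_nonneg:
  assumes "N_function phi phi'" "0 \<le> t"
  shows "0 \<le> phi' t"
  using N_function_deriv_mono[OF assms(1) order_refl assms(2)] assms(1)
  by (simp add: N_function_def)

lemma uniformly_convex_N_secant_bounds:
  assumes "uniformly_convex_N cuc Cuc phi phi'" "0 \<le> t" "t \<le> s"
  shows "cuc * (phi' s - phi' t) \<le> phi' s / s * (s - t)"
    and "phi' s / s * (s - t) \<le> Cuc * (phi' s - phi' t)"
proof -
  have "cuc * (phi' s - phi' t) \<le> phi' s / s * (s - t) \<and>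
        phi' s / s * (s - t) \<le> Cuc * (phi' s - phi' t)"
  proof (cases "t < s")
    case True
    with assms have "cuc * ((phi' s - phi' t) / (s - t)) \<le> phi' s / s"
      and "phi' s / s \<le> Cuc * ((phi' s - phi' t) / (s - t))"
      unfolding uniformly_convex_N_def by auto
    with True show ?thesis by (simp add: field_simps)
  qed (use assms in simp)
  then show "cuc * (phi' s - phi' t) \<le> phi' s / s * (s - t)"
    and "phi' s / s * (s - t) \<le> Cuc * (phi' s - phi' t)" by auto
qed

definition flux_angle_bound :: "real \<Rightarrow> real \<Rightarrow> real" where
  "flux_angle_bound cuc Cuc = sqrt (min cuc (1 / Cuc))"

lemma flux_angle_bound_pos:
  assumes "0 < cuc" "cuc \<le> Cuc"
  shows "0 < flux_angle_bound cuc Cuc"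
  using assms by (simp add: flux_angle_bound_def)

lemma flux_angle_bound_le_1:
  assumes "0 < cuc" "cuc \<le> Cuc"
  shows "flux_angle_bound cuc Cuc \<le> 1"
proof -
  have "min cuc (1 / Cuc) \<le> 1"
  proof (cases "cuc \<le> 1")
    case False
    with assms have "1 < Cuc" by simp
    then show ?thesis by (simp add: min_le_iff_disj)
  qed simp
  then show ?thesis by (simp add: flux_angle_bound_def)
qed

lemma flux_angle_bound_half_le:
  assumes "0 < cuc" "cuc \<le> Cuc"
  shows "flux_angle_bound cuc Cuc / 2 \<le> 2 / flux_angle_bound cuc Cuc"
proof -
  have "flux_angle_bound cuc Cuc / 2 \<le> 1" "1 \<le> 2 / flux_angle_bound cuc Cuc"
    using flux_angle_bound_pos[OF assms] flux_angle_bound_le_1[OF assms]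
    by (simp_all add: le_divide_eq)
  then show ?thesis by linarith
qed

text \<open>The scalar core of the angle bound: u and d are the radial differences
  phi' |P| - phi' |R| and |P| - |R|, a and b the weights phi' |P| / |P| and phi' |R| / |R|,
  and y = |P| |R| - P \<bullet> R.\<close>

lemma radial_angle_estimate:
  fixes k a b u d y :: real
  assumes "0 \<le> k" "k \<le> 1" "0 \<le> a" "0 \<le> b" "0 \<le> u" "0 \<le> d" "0 \<le> y"
    and lower: "k * u \<le> a * d" and upper: "k * (a * d) \<le> u"
  shows "k * (u\<^sup>2 + 2 * a * b * y) * (d\<^sup>2 + 2 * y) \<le> (u * d + (a + b) * y)\<^sup>2"
proof -
  have "k * (u\<^sup>2 * d\<^sup>2) \<le> u\<^sup>2 * d\<^sup>2"
    using assms by (intro mult_left_le_one_le) auto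
  moreover have "(k * u) * (2 * u * y) \<le> (a * d) * (2 * u * y)"
    using lower assms by (intro mult_right_mono) auto
  moreover have "(k * (a * d)) * (2 * b * y * d) \<le> u * (2 * b * y * d)"
    using upper assms by (intro mult_right_mono) auto
  moreover have "k * (4 * a * b) * y\<^sup>2 \<le> (a + b)\<^sup>2 * y\<^sup>2"
  proof (rule mult_right_mono)
    have "k * (4 * a * b) \<le> 4 * a * b"
      using assms by (intro mult_left_le_one_le) auto
    also have "\<dots> \<le> (a + b)\<^sup>2"
      using zero_le_power2[of "a - b"] by (simp add: power2_eq_square algebra_simps)
    finally show "k * (4 * a * b) \<le> (a + b)\<^sup>2" .
  qed simp
  ultimately show ?thesis
    by (simp add: power2_eq_square algebra_simps)
qed

lemma A_flux_eq_scaleR: "A_flux phi' Q = (phi' (norm Q) / norm Q) *\<^sub>R Q"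
  by (simp add: A_flux_def)

lemma A_flux_inner_lower_bound_ordered:
  fixes P R :: "'a::real_inner"
  assumes uc: "uniformly_convex_N cuc Cuc phi phi'" and RP: "norm R \<le> norm P"
  shows "flux_angle_bound cuc Cuc * norm (A_flux phi' P - A_flux phi' R) * norm (P - R)
           \<le> (A_flux phi' P - A_flux phi' R) \<bullet> (P - R)"
proof -
  have N: "N_function phi phi'" and cuc: "0 < cuc" "cuc \<le> Cuc"
    using uc unfolding uniformly_convex_N_def by auto
  define k where "k = min cuc (1 / Cuc)"
  define s t where "s = norm P" and "t = norm R"
  define a b where "a = phi' s / s" and "b = phi' t / t"
  define u d y where "u = phi' s - phi' t" and "d = s - t" and "y = s * t - P \<bullet> R"
  have ts: "0 \<le> t" "t \<le> s" using RP by (simp_all add: s_def t_def)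
  have phi'0: "phi' 0 = 0" using N by (simp add: N_function_def)
  have radial: "a * s - b * t = u" by (cases "s = 0"; cases "t = 0") (auto simp: a_def b_def u_def phi'0)
  have nonneg: "0 \<le> k" "k \<le> 1" "0 \<le> a" "0 \<le> b" "0 \<le> u" "0 \<le> d" "0 \<le> y"
    using cuc flux_angle_bound_le_1[OF cuc] ts N_function_deriv_nonneg[OF N] N_function_deriv_mono[OF N]
      norm_cauchy_schwarz[of P R]
    by (auto simp: k_def flux_angle_bound_def a_def b_def u_def d_def y_def s_def t_def)
  have "k * u \<le> cuc * u"
    using nonneg by (intro mult_right_mono) (simp_all add: k_def)
  also have "\<dots> \<le> a * d"
    using uniformly_convex_N_secant_bounds(1)[OF uc ts] by (simp add: a_def u_def d_def)
  finally have "k * u \<le> a * d" .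
  moreover have "k * (a * d) \<le> u"
  proof -
    have "k * (a * d) \<le> k * (Cuc * u)"
      using uniformly_convex_N_secant_bounds(2)[OF uc ts] nonneg
      by (intro mult_left_mono) (simp_all add: a_def u_def d_def)
    also have "\<dots> = (k * Cuc) * u" by simp
    also have "\<dots> \<le> u"
    proof (rule mult_left_le_one_le)
      have "k \<le> 1 / Cuc" by (simp add: k_def)
      with cuc show "k * Cuc \<le> 1" by (simp add: pos_le_divide_eq)
    qed (use cuc nonneg in auto)
    finally show ?thesis .
  qed
  ultimately have estimate: "k * (u\<^sup>2 + 2 * a * b * y) * (d\<^sup>2 + 2 * y) \<le> (u * d + (a + b) * y)\<^sup>2"
    using nonneg by (intro radial_angle_estimate)
  have flux: "A_flux phi' P - A_flux phi' R = a *\<^sub>R P - b *\<^sub>R R"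
    by (simp add: A_flux_eq_scaleR a_def b_def s_def t_def)
  have norm_flux: "(norm (A_flux phi' P - A_flux phi' R))\<^sup>2 = u\<^sup>2 + 2 * a * b * y"
    by (simp add: flux norm_scaleR_diff_power2 radial y_def flip: s_def t_def)
  have norm_diff: "(norm (P - R))\<^sup>2 = d\<^sup>2 + 2 * y"
    using norm_scaleR_diff_power2[of 1 P 1 R] by (simp add: d_def y_def flip: s_def t_def)
  have inner: "(A_flux phi' P - A_flux phi' R) \<bullet> (P - R) = u * d + (a + b) * y"
    by (simp add: flux inner_scaleR_diff_diff radial d_def y_def flip: s_def t_def)
  have "sqrt k * norm (A_flux phi' P - A_flux phi' R) * norm (P - R)
      = sqrt (k * (u\<^sup>2 + 2 * a * b * y) * (d\<^sup>2 + 2 * y))"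
    by (simp add: real_sqrt_mult flip: norm_flux norm_diff)
  also have "\<dots> \<le> sqrt ((u * d + (a + b) * y)\<^sup>2)"
    using estimate by (rule real_sqrt_le_mono)
  also have "\<dots> = (A_flux phi' P - A_flux phi' R) \<bullet> (P - R)"
    using nonneg by (simp add: inner)
  finally show ?thesis by (simp add: flux_angle_bound_def k_def)
qed

lemma A_flux_inner_lower_bound:
  fixes P R :: "'a::real_inner"
  assumes "uniformly_convex_N cuc Cuc phi phi'"
  shows "flux_angle_bound cuc Cuc * norm (A_flux phi' P - A_flux phi' R) * norm (P - R)
           \<le> (A_flux phi' P - A_flux phi' R) \<bullet> (P - R)"
proof (cases "norm R \<le> norm P")
  case False
  then have "norm P \<le> norm R" by simp
  from A_flux_inner_lower_bound_ordered[OF assms this] show ?thesis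
    by (simp add: norm_minus_commute inner_diff_left inner_diff_right algebra_simps)
qed (rule A_flux_inner_lower_bound_ordered[OF assms])

lemma A_flux_jump_dichotomy:
  fixes P R \<nu> :: "'a::real_inner"
  assumes uc: "uniformly_convex_N cuc Cuc phi phi'" and \<nu>: "norm \<nu> = 1"
  defines "\<gamma> \<equiv> flux_angle_bound cuc Cuc"
    and "\<tau> \<equiv> norm ((P - R) - ((P - R) \<bullet> \<nu>) *\<^sub>R \<nu>)"
  shows "(\<gamma>/2 * \<tau> \<le> norm (P - R) \<and> norm (P - R) \<le> 2/\<gamma> * \<tau>) \<or>
         (\<gamma>/2 * \<bar>A_flux phi' P \<bullet> \<nu> - A_flux phi' R \<bullet> \<nu>\<bar> \<le> norm (A_flux phi' P - A_flux phi' R) \<and>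
          norm (A_flux phi' P - A_flux phi' R) \<le> 2/\<gamma> * \<bar>A_flux phi' P \<bullet> \<nu> - A_flux phi' R \<bullet> \<nu>\<bar>)"
proof -
  have "0 < cuc" "cuc \<le> Cuc" using uc by (simp_all add: uniformly_convex_N_def)
  then have \<gamma>: "0 < \<gamma>" "\<gamma>/2 \<le> 1"
    using flux_angle_bound_pos flux_angle_bound_le_1[of cuc Cuc] by (simp_all add: \<gamma>_def)
  have shrink: "\<gamma>/2 * x \<le> y" if "0 \<le> x" "x \<le> y" for x y
    using mult_left_le_one_le[of x "\<gamma>/2"] that \<gamma> by simp
  have "\<gamma>/2 * \<tau> \<le> norm (P - R)"
    unfolding \<tau>_def by (intro shrink norm_tangential_le[OF \<nu>] norm_ge_zero)
  moreover have "\<gamma>/2 * \<bar>(A_flux phi' P - A_flux phi' R) \<bullet> \<nu>\<bar> \<le> norm (A_flux phi' P - A_flux phi' R)"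
    using Cauchy_Schwarz_ineq2[of _ \<nu>] \<nu> by (intro shrink) simp_all
  moreover have "norm (P - R) \<le> 2/\<gamma> * \<tau> \<or>
      norm (A_flux phi' P - A_flux phi' R) \<le> 2/\<gamma> * \<bar>(A_flux phi' P - A_flux phi' R) \<bullet> \<nu>\<bar>"
    unfolding \<tau>_def
    by (rule normal_or_tangential_dominates[OF \<nu> \<gamma>(1) A_flux_inner_lower_bound[OF uc, folded \<gamma>_def]])
  ultimately show ?thesis by (auto simp: inner_diff_left)
qed

lemma A_flux_jump_dichotomy_2:
  fixes P R \<nu> :: "real^2"
  assumes "uniformly_convex_N cuc Cuc phi phi'" "norm \<nu> = 1"
  defines "\<gamma> \<equiv> flux_angle_bound cuc Cuc"
  shows "(\<gamma>/2 * \<bar>tang2 \<nu> P - tang2 \<nu> R\<bar> \<le> norm (P - R) \<and>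
          norm (P - R) \<le> 2/\<gamma> * \<bar>tang2 \<nu> P - tang2 \<nu> R\<bar>) \<or>
         (\<gamma>/2 * \<bar>A_flux phi' P \<bullet> \<nu> - A_flux phi' R \<bullet> \<nu>\<bar> \<le> norm (A_flux phi' P - A_flux phi' R) \<and>
          norm (A_flux phi' P - A_flux phi' R) \<le> 2/\<gamma> * \<bar>A_flux phi' P \<bullet> \<nu> - A_flux phi' R \<bullet> \<nu>\<bar>)"
  using A_flux_jump_dichotomy[OF assms(1,2)]
  by (simp add: \<gamma>_def tang2_diff abs_tang2_eq_norm_tangential[OF assms(2)])

lemma A_flux_jump_dichotomy_3:
  fixes P R \<nu> :: "real^3"
  assumes "uniformly_convex_N cuc Cuc phi phi'" "norm \<nu> = 1"
  defines "\<gamma> \<equiv> flux_angle_bound cuc Cuc"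
  shows "(\<gamma>/2 * norm (tang3 \<nu> P - tang3 \<nu> R) \<le> norm (P - R) \<and>
          norm (P - R) \<le> 2/\<gamma> * norm (tang3 \<nu> P - tang3 \<nu> R)) \<or>
         (\<gamma>/2 * \<bar>A_flux phi' P \<bullet> \<nu> - A_flux phi' R \<bullet> \<nu>\<bar> \<le> norm (A_flux phi' P - A_flux phi' R) \<and>
          norm (A_flux phi' P - A_flux phi' R) \<le> 2/\<gamma> * \<bar>A_flux phi' P \<bullet> \<nu> - A_flux phi' R \<bullet> \<nu>\<bar>)"
  using A_flux_jump_dichotomy[OF assms(1,2)]
  by (simp add: \<gamma>_def tang3_diff norm_tang3_eq_norm_tangential[OF assms(2)])

theorem lemma3p1:
  shows
  "(\<forall>cuc Cuc \<sigma>. 0 < cuc \<and> cuc \<le> Cuc \<longrightarrow>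
     (\<exists>c C. 0 < c \<and> c \<le> C \<and>
       (\<forall>(\<Omega> :: (real^2) set) \<T> phi phi' F Tp Tm \<nu> v.
          lipschitz_domain \<Omega> \<and> triangulation \<Omega> \<T> \<and> shape_regular \<sigma> \<T> \<and>
          uniformly_convex_N cuc Cuc phi phi' \<and>
          F \<in> interior_faces \<Omega> \<T> \<and> Tp \<in> \<T> \<and> Tm \<in> \<T> \<and> Tp \<noteq> Tm \<and>
          convex hull Tp \<inter> convex hull Tm = convex hull F \<and>
          unit_normal_from F Tp \<nu> \<and> v \<in> CR_space \<Omega> \<T> \<longrightarrow>
          (c * \<bar>tang2 \<nu> (grad_h v Tp) - tang2 \<nu> (grad_h v Tm)\<bar> \<le> norm (grad_h v Tp - grad_h v Tm) \<and>
           norm (grad_h v Tp - grad_h v Tm) \<le> C * \<bar>tang2 \<nu> (grad_h v Tp) - tang2 \<nu> (grad_h v Tm)\<bar>) \<or>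
          (c * \<bar>A_flux phi' (grad_h v Tp) \<bullet> \<nu> - A_flux phi' (grad_h v Tm) \<bullet> \<nu>\<bar>
              \<le> norm (A_flux phi' (grad_h v Tp) - A_flux phi' (grad_h v Tm)) \<and>
           norm (A_flux phi' (grad_h v Tp) - A_flux phi' (grad_h v Tm))
              \<le> C * \<bar>A_flux phi' (grad_h v Tp) \<bullet> \<nu> - A_flux phi' (grad_h v Tm) \<bullet> \<nu>\<bar>))))
   \<and>
   (\<forall>cuc Cuc \<sigma>. 0 < cuc \<and> cuc \<le> Cuc \<longrightarrow>
     (\<exists>c C. 0 < c \<and> c \<le> C \<and>
       (\<forall>(\<Omega> :: (real^3) set) \<T> phi phi' F Tp Tm \<nu> v.
          lipschitz_domain \<Omega> \<and> triangulation \<Omega> \<T> \<and> shape_regular \<sigma> \<T> \<and>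
          uniformly_convex_N cuc Cuc phi phi' \<and>
          F \<in> interior_faces \<Omega> \<T> \<and> Tp \<in> \<T> \<and> Tm \<in> \<T> \<and> Tp \<noteq> Tm \<and>
          convex hull Tp \<inter> convex hull Tm = convex hull F \<and>
          unit_normal_from F Tp \<nu> \<and> v \<in> CR_space \<Omega> \<T> \<longrightarrow>
          (c * norm (tang3 \<nu> (grad_h v Tp) - tang3 \<nu> (grad_h v Tm)) \<le> norm (grad_h v Tp - grad_h v Tm) \<and>
           norm (grad_h v Tp - grad_h v Tm) \<le> C * norm (tang3 \<nu> (grad_h v Tp) - tang3 \<nu> (grad_h v Tm))) \<or>
          (c * \<bar>A_flux phi' (grad_h v Tp) \<bullet> \<nu> - A_flux phi' (grad_h v Tm) \<bullet> \<nu>\<bar>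
              \<le> norm (A_flux phi' (grad_h v Tp) - A_flux phi' (grad_h v Tm)) \<and>
           norm (A_flux phi' (grad_h v Tp) - A_flux phi' (grad_h v Tm))
              \<le> C * \<bar>A_flux phi' (grad_h v Tp) \<bullet> \<nu> - A_flux phi' (grad_h v Tm) \<bullet> \<nu>\<bar>))))"
  apply (intro conjI allI impI)
  subgoal for cuc Cuc \<sigma>
    using flux_angle_bound_pos[of cuc Cuc] flux_angle_bound_half_le[of cuc Cuc]
    by (intro exI[of _ "flux_angle_bound cuc Cuc / 2"] exI[of _ "2 / flux_angle_bound cuc Cuc"]
        conjI allI impI A_flux_jump_dichotomy_2) (auto simp: unit_normal_from_def)
  subgoal for cuc Cuc \<sigma>
    using flux_angle_bound_pos[of cuc Cuc] flux_angle_bound_half_le[of cuc Cuc]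
    by (intro exI[of _ "flux_angle_bound cuc Cuc / 2"] exI[of _ "2 / flux_angle_bound cuc Cuc"]
        conjI allI impI A_flux_jump_dichotomy_3) (auto simp: unit_normal_from_def)
  done

end
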